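(* Let $\xi^{(1)},\dots,\xi^{(N)}\in\mathbb{R}^D$, $\epsilon\in(0,1)$, and let $\alpha$, $\mathrm{SV}$, $\mathrm{BSV}\neq\emptyset$, $W$, $\gamma$ and the polyhedron $$\mathcal{U}=\Big\{\xi\in\mathbb{R}^D\ \Big|\ \exists\,\upsilon_n\in\mathbb{R}^D\ (n\in\mathrm{SV})\ \text{s.t.}\ \sum_{n\in\mathrm{SV}}\alpha_n\upsilon_n^\intercal\mathbf{1}\le\gamma,\ \ -\upsilon_n\le W(\xi-\xi^{(n)})\le\upsilon_n\ \ \forall n\in\mathrm{SV}\Big\}$$ be as described in the context. Let $y\in\mathbb{R}^p$, $H\in\mathbb{R}^{p\times D}$ and $\beta\in\mathbb{R}$. Then the robust constraint $$\max_{\xi\in\mathcal{U}}\ (H\xi)^\intercal y\le\beta$$ holds if and only if there exist $\pi\ge0$ and $\mu_n,\rho_n\in\mathbb{R}^D_{\ge0}$ for $n\in\mathrm{SV}$ such that $$\sum_{n\in\mathrm{SV}}(\mu_n-\rho_n)^\intercal W\xi^{(n)}+\pi\gamma\le\beta,\qquad \sum_{n\in\mathrm{SV}}W(\rho_n-\mu_n)+H^\intercal y=0,\qquad \rho_n+\mu_n=\pi\alpha_n\mathbf 1\ \ \forall n\in\mathrm{SV}.$$ (These are linear constraints in $(y,\beta,\pi,\mu,\rho)$ when $\beta$ is affine in $y$.)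
   Context: Let $\Sigma$ be the (positive definite) covariance matrix of the samples and $W=\Sigma^{-1/2}$ (symmetric). For $d=1,\dots,D$ let $l_d=\xi_{d,\max}-\xi_{d,\min}$ (upper minus lower bound of the uncertainty in coordinate $d$). Kernel: $K(\xi^{1},\xi^{2})=\sum_{d=1}^D l_d-\Vert W(\xi^{1}-\xi^{2})\Vert_1$, with feature map $\phi$ into a Hilbert space satisfying $\phi(a)^\intercal\phi(b)=K(a,b)$. One-class support vector clustering solves $$\min_{R,o,\omega}\ R^2+\frac{1}{N\epsilon}\sum_{n=1}^N\omega_n\quad\text{s.t.}\quad \Vert\phi(\xi^{(n)})-o\Vert^2\le R^2+\omega_n,\ \ \omega_n\ge0,\ \ n=1,\dots,N.$$ Let $(R,o,\omega)$ be optimal with multipliers $\alpha,\beta'\in\mathbb{R}^N_{\ge0}$ satisfying the KKT conditions $\mathbf 1^\intercal\alpha=1$, $o=\sum_n\alpha_n\phi(\xi^{(n)})$, $\alpha+\beta'=\frac{1}{N\epsilon}\mathbf 1$, $\omega_n\beta'_n=0$, $\alpha_n(R^2+\omega_n-\Vert\phi(\xi^{(n)})-o\Vert^2)=0$. Let $\mathrm{SV}=\{n:\alpha_n>0\}$, $\mathrm{BSV}=\{n:0<\alpha_n<1/(N\epsilon)\}$, and for any $k\in\mathrm{BSV}$ let $\gamma=\sum_{n\in\mathrm{SV}}\alpha_n\Vert W(\xi^{(k)}-\xi^{(n)})\Vert_1$. Vector inequalities are componentwise and $\mathbf 1$ is the all-ones vector. *)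

theory Defs
  imports "HOL-Analysis.Analysis"
begin

definition l1norm :: "real^'d \<Rightarrow> real" where
  "l1norm x = (\<Sum>i\<in>UNIV. \<bar>x $ i\<bar>)"

definition kernelK :: "real^'d \<Rightarrow> real^'d \<Rightarrow> real^'d^'d \<Rightarrow> real^'d \<Rightarrow> real^'d \<Rightarrow> real" where
  "kernelK ximin ximax W a b = (\<Sum>d\<in>UNIV. ximax $ d - ximin $ d) - l1norm (W *v (a - b))"

definition svc_feasible ::
  "nat \<Rightarrow> (nat \<Rightarrow> real^'d) \<Rightarrow> (real^'d \<Rightarrow> 'h::real_inner) \<Rightarrow> real \<Rightarrow> 'h \<Rightarrow> (nat \<Rightarrow> real) \<Rightarrow> bool" where
  "svc_feasible N xi phi R c omega \<longleftrightarrow>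
     (\<forall>n\<in>{1..N}. (norm (phi (xi n) - c))^2 \<le> R^2 + omega n \<and> omega n \<ge> 0)"

definition svc_objective :: "nat \<Rightarrow> real \<Rightarrow> real \<Rightarrow> (nat \<Rightarrow> real) \<Rightarrow> real" where
  "svc_objective N eps R omega = R^2 + (1 / (real N * eps)) * (\<Sum>n=1..N. omega n)"

definition svc_optimal ::
  "nat \<Rightarrow> real \<Rightarrow> (nat \<Rightarrow> real^'d) \<Rightarrow> (real^'d \<Rightarrow> 'h::real_inner) \<Rightarrow> real \<Rightarrow> 'h \<Rightarrow> (nat \<Rightarrow> real) \<Rightarrow> bool" where
  "svc_optimal N eps xi phi R c omega \<longleftrightarrow>
     svc_feasible N xi phi R c omega \<and>
     (\<forall>R' c' omega'. svc_feasible N xi phi R' c' omega' \<longrightarrow>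
         svc_objective N eps R omega \<le> svc_objective N eps R' omega')"

definition U_set :: "(nat \<Rightarrow> real^'d) \<Rightarrow> (nat \<Rightarrow> real) \<Rightarrow> nat set \<Rightarrow> real^'d^'d \<Rightarrow> real \<Rightarrow> (real^'d) set" where
  "U_set xi alpha SV W gamma =
     {x. \<exists>upsilon :: nat \<Rightarrow> real^'d.
          (\<Sum>n\<in>SV. alpha n * (\<Sum>i\<in>UNIV. upsilon n $ i)) \<le> gamma \<and>
          (\<forall>n\<in>SV. \<forall>i. - (upsilon n $ i) \<le> (W *v (x - xi n)) $ i \<and>
                        (W *v (x - xi n)) $ i \<le> upsilon n $ i)}"

end

theory Submission
  imports Defs
begin

text \<open>Since \<open>\<alpha>\<close> is positive on \<open>SV\<close>, \<open>U\<close> is the sublevel set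
  \<open>{x. \<Sum>n\<in>SV. \<alpha> n * \<parallel>W (x - \<xi> n)\<parallel>\<^sub>1 \<le> \<gamma>}\<close>. Writing each \<open>l\<^sub>1\<close> norm as the maximum of
  \<open>s \<bullet> z\<close> over the sign vectors \<open>s \<in> {-1, 1}\<^sup>D\<close> exhibits \<open>U\<close> as a polyhedron with one
  inequality for each family \<open>\<sigma>\<close> of sign vectors indexed by \<open>SV\<close>. The robust constraint says
  that \<open>(H\<^sup>T y) \<bullet> x \<le> \<beta>\<close> is implied by these inequalities, so by the affine Farkas lemma it
  is a weakened nonnegative combination of them; the multipliers \<open>u \<sigma>\<close> give
  \<open>\<pi> = \<Sum>\<sigma> u \<sigma>\<close> and \<open>\<mu> n - \<rho> n = \<alpha> n \<Sum>\<sigma> u \<sigma> \<sigma> n\<close>. No feasibility of \<open>U\<close> is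
  needed: \<open>W\<close> is injective and \<open>SV \<noteq> {}\<close>, so the constraint normals positively span \<open>\<real>\<^sup>D\<close>.
  The converse is weak duality: \<open>\<bar>\<mu> n - \<rho> n\<bar> \<le> \<pi> \<alpha> n\<close> componentwise bounds
  \<open>(\<mu> n - \<rho> n) \<bullet> W (x - \<xi> n)\<close> by \<open>\<pi> \<alpha> n \<parallel>W (x - \<xi> n)\<parallel>\<^sub>1\<close>.\<close>

lemma separating_hyperplane_closed_convex_cone:
  fixes z :: "'a::euclidean_space"
  assumes K: "convex_cone K" "closed K" and "z \<notin> K"
  shows "\<exists>a. a \<bullet> z < 0 \<and> (\<forall>x\<in>K. 0 \<le> a \<bullet> x)"
proof -
  have "convex K"
    using K(1) by (simp add: convex_cone_def)
  then obtain a b where a_z: "a \<bullet> z < b" and a_K: "\<And>x. x \<in> K \<Longrightarrow> b < a \<bullet> x"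
    using separating_hyperplane_closed_point[OF _ K(2) \<open>z \<notin> K\<close>] by blast
  have "b < 0"
    using a_K[of 0] K(1) by (simp add: convex_cone_iff)
  have "0 \<le> a \<bullet> x" if "x \<in> K" for x
  proof (rule ccontr)
    assume neg: "\<not> 0 \<le> a \<bullet> x"
    then have "(b / (a \<bullet> x)) *\<^sub>R x \<in> K"
      using \<open>b < 0\<close> \<open>x \<in> K\<close> K(1) by (intro convex_cone_scaleR) (auto simp: divide_nonpos_neg)
    moreover have "a \<bullet> ((b / (a \<bullet> x)) *\<^sub>R x) = b"
      using neg by simp
    ultimately show False
      using a_K by force
  qed
  moreover have "a \<bullet> z < 0"
    using a_z \<open>b < 0\<close> by simp
  ultimately show ?thesis
    by blast
qed

text \<open>A pair \<open>(c, \<beta>)\<close> encodes the inequality \<open>c \<bullet> x \<le> \<beta>\<close>.\<close>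

definition consequence_cone :: "'i set \<Rightarrow> ('i \<Rightarrow> 'a::real_vector) \<Rightarrow> ('i \<Rightarrow> real) \<Rightarrow> ('a \<times> real) set"
where
  "consequence_cone J a b =
     {(c, \<beta>). \<exists>u. (\<forall>j\<in>J. 0 \<le> u j) \<and> c = (\<Sum>j\<in>J. u j *\<^sub>R a j) \<and> (\<Sum>j\<in>J. u j * b j) \<le> \<beta>}"

lemma convex_cone_consequence_cone: "convex_cone (consequence_cone J a b)"
  unfolding convex_cone_iff
proof (intro conjI ballI allI impI)
  show "0 \<in> consequence_cone J a b"
    by (auto simp: consequence_cone_def zero_prod_def intro!: exI[of _ "\<lambda>_. 0"])
next
  fix p q assume "p \<in> consequence_cone J a b" "q \<in> consequence_cone J a b"
  then obtain u v where
    "\<forall>j\<in>J. 0 \<le> u j" "fst p = (\<Sum>j\<in>J. u j *\<^sub>R a j)" "(\<Sum>j\<in>J. u j * b j) \<le> snd p" and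
    "\<forall>j\<in>J. 0 \<le> v j" "fst q = (\<Sum>j\<in>J. v j *\<^sub>R a j)" "(\<Sum>j\<in>J. v j * b j) \<le> snd q"
    by (auto simp: consequence_cone_def)
  then show "p + q \<in> consequence_cone J a b"
    by (auto simp: consequence_cone_def split_beta scaleR_add_left sum.distrib distrib_right add_mono
        intro!: exI[of _ "\<lambda>j. u j + v j"])
next
  fix p and r :: real assume "p \<in> consequence_cone J a b" "0 \<le> r"
  then obtain u where
    "\<forall>j\<in>J. 0 \<le> u j" "fst p = (\<Sum>j\<in>J. u j *\<^sub>R a j)" "(\<Sum>j\<in>J. u j * b j) \<le> snd p"
    by (auto simp: consequence_cone_def)
  then show "r *\<^sub>R p \<in> consequence_cone J a b"
    using \<open>0 \<le> r\<close>
    by (auto simp: consequence_cone_def split_beta scaleR_sum_right mult.assoc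
        sum_distrib_left[symmetric] mult_left_mono intro!: exI[of _ "\<lambda>j. r * u j"])
qed

lemma generators_subset_consequence_cone:
  assumes "finite J"
  shows "insert (0, 1) ((\<lambda>j. (a j, b j)) ` J) \<subseteq> consequence_cone J a b"
proof -
  have "(0, 1) \<in> consequence_cone J a b"
    by (auto simp: consequence_cone_def intro!: exI[of _ "\<lambda>_. 0"])
  moreover have "(a j, b j) \<in> consequence_cone J a b" if "j \<in> J" for j
    using assms that
    by (auto simp: consequence_cone_def if_distrib[of "\<lambda>t. t *\<^sub>R _"] if_distrib[of "\<lambda>t. t * _"]
        cong: if_cong intro!: exI[of _ "\<lambda>i. if i = j then 1 else 0"])
  ultimately show ?thesis
    by blast
qed

text \<open>Affine Farkas lemma. The spanning hypothesis rules out separating hyperplanes with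
  vanishing last coordinate; it replaces the usual feasibility assumption on the system.\<close>

lemma implied_inequality_in_consequence_cone:
  fixes a :: "'i \<Rightarrow> 'a::euclidean_space" and b :: "'i \<Rightarrow> real"
  assumes "finite J"
    and spanning: "\<And>v. \<forall>j\<in>J. 0 \<le> v \<bullet> a j \<Longrightarrow> v = 0"
    and implied: "\<And>x. \<forall>j\<in>J. a j \<bullet> x \<le> b j \<Longrightarrow> c \<bullet> x \<le> \<beta>"
  shows "(c, \<beta>) \<in> consequence_cone J a b"
proof -
  define G where "G = insert (0, 1) ((\<lambda>j. (a j, b j)) ` J)"
  have "(c, \<beta>) \<in> convex_cone hull G"
  proof (rule ccontr)
    assume "(c, \<beta>) \<notin> convex_cone hull G"
    moreover have "closed (convex_cone hull G)"
      using \<open>finite J\<close> by (simp add: G_def closed_convex_cone_hull)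
    ultimately obtain w where sep: "w \<bullet> (c, \<beta>) < 0"
      and cone: "\<forall>g\<in>convex_cone hull G. 0 \<le> w \<bullet> g"
      using separating_hyperplane_closed_convex_cone[OF convex_cone_convex_cone_hull] by blast
    obtain v t where w: "w = (v, t)"
      by (cases w)
    have G_nonneg: "0 \<le> v \<bullet> g1 + t * g2" if "(g1, g2) \<in> G" for g1 g2
    proof -
      have "(g1, g2) \<in> convex_cone hull G"
        using that hull_subset[of G convex_cone] by blast
      then show ?thesis
        using cone by (force simp: w)
    qed
    have "0 \<le> t"
      using G_nonneg[of 0 1] by (simp add: G_def)
    have generators: "0 \<le> v \<bullet> a j + t * b j" if "j \<in> J" for j
      using G_nonneg[of "a j" "b j"] that by (simp add: G_def)
    show False
    proof (cases "t = 0")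
      case True
      then have "v = 0"
        using generators by (intro spanning) simp
      then show False
        using sep True by (simp add: w)
    next
      case False
      with \<open>0 \<le> t\<close> have "0 < t" by simp
      define x where "x = - (1 / t) *\<^sub>R v"
      have "a j \<bullet> x \<le> b j" if "j \<in> J" for j
        using generators[OF that] \<open>0 < t\<close> by (simp add: x_def inner_commute field_simps)
      then have "c \<bullet> x \<le> \<beta>"
        by (intro implied) blast
      then show False
        using sep \<open>0 < t\<close> by (simp add: w x_def field_simps inner_commute)
    qed
  qed
  also have "convex_cone hull G \<subseteq> consequence_cone J a b"
    using generators_subset_consequence_cone[OF \<open>finite J\<close>] convex_cone_consequence_cone
    unfolding G_def by (rule hull_minimal)
  finally show ?thesis .
qed

lemma symmetric_matrix_inner:
  fixes W :: "real^'n^'n"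
  assumes "transpose W = W"
  shows "x \<bullet> (W *v v) = v \<bullet> (W *v x)"
  by (metis assms dot_lmul_matrix inner_commute vector_transpose_matrix)

lemma matrix_vector_mult_sum:
  fixes W :: "real^'n^'m"
  shows "W *v (\<Sum>i\<in>A. g i) = (\<Sum>i\<in>A. W *v g i)"
  by (induction A rule: infinite_finite_induct) (simp_all add: matrix_vector_right_distrib)

definition sign_vectors :: "(real^'n) set" where
  "sign_vectors = {s. \<forall>i. s $ i = 1 \<or> s $ i = -1}"

lemma finite_sign_vectors: "finite (sign_vectors :: (real^'n) set)"
proof (rule finite_subset)
  show "(sign_vectors :: (real^'n) set) \<subseteq> vec_lambda ` (UNIV \<rightarrow>\<^sub>E {-1, 1})"
  proof
    fix s :: "real^'n" assume "s \<in> sign_vectors"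
    then have "vec_nth s \<in> UNIV \<rightarrow>\<^sub>E {-1, 1}"
      by (auto simp: sign_vectors_def)
    then show "s \<in> vec_lambda ` (UNIV \<rightarrow>\<^sub>E {-1, 1})"
      by (rule rev_image_eqI) simp
  qed
qed (simp add: finite_PiE)

lemma inner_le_l1norm:
  assumes "\<And>i. \<bar>s $ i\<bar> \<le> m"
  shows "s \<bullet> z \<le> m * l1norm z"
proof -
  have "s \<bullet> z \<le> (\<Sum>i\<in>UNIV. \<bar>s $ i\<bar> * \<bar>z $ i\<bar>)"
    unfolding inner_vec_def by (intro sum_mono) (simp add: abs_mult[symmetric])
  also have "\<dots> \<le> (\<Sum>i\<in>UNIV. m * \<bar>z $ i\<bar>)"
    using assms by (intro sum_mono mult_right_mono) auto
  finally show ?thesis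
    by (simp add: l1norm_def sum_distrib_left)
qed

lemma inner_sign_vector_le_l1norm:
  assumes "s \<in> sign_vectors"
  shows "s \<bullet> z \<le> l1norm z"
proof -
  have "\<bar>s $ i\<bar> \<le> 1" for i
  proof -
    have "s $ i = 1 \<or> s $ i = -1"
      using assms by (simp add: sign_vectors_def)
    then show ?thesis
      by auto
  qed
  then show ?thesis
    using inner_le_l1norm[of s 1 z] by simp
qed

lemma l1norm_eq_inner_sign_vector: "\<exists>s\<in>sign_vectors. s \<bullet> z = l1norm z"
proof
  show "(\<chi> i. if 0 \<le> z $ i then 1 else -1) \<in> sign_vectors"
    by (simp add: sign_vectors_def)
  show "(\<chi> i. if 0 \<le> z $ i then 1 else -1) \<bullet> z = l1norm z"
    unfolding inner_vec_def l1norm_def by (intro sum.cong) auto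
qed

lemma l1norm_eq_0_iff: "l1norm z = 0 \<longleftrightarrow> z = 0"
  by (simp add: l1norm_def sum_nonneg_eq_0_iff vec_eq_iff)

lemma abs_nonneg_combination_sign_vectors_le:
  assumes "\<forall>\<sigma>\<in>S. 0 \<le> u \<sigma>" and "\<forall>\<sigma>\<in>S. \<sigma> n \<in> sign_vectors"
  shows "\<bar>(\<Sum>\<sigma>\<in>S. u \<sigma> *\<^sub>R \<sigma> n) $ i\<bar> \<le> (\<Sum>\<sigma>\<in>S. u \<sigma>)"
proof -
  have "\<bar>(\<Sum>\<sigma>\<in>S. u \<sigma> *\<^sub>R \<sigma> n) $ i\<bar> \<le> (\<Sum>\<sigma>\<in>S. \<bar>u \<sigma> * \<sigma> n $ i\<bar>)"
    by simp
  also have "\<dots> = (\<Sum>\<sigma>\<in>S. u \<sigma>)"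
  proof (rule sum.cong[OF refl])
    fix \<sigma> assume "\<sigma> \<in> S"
    then have "\<sigma> n $ i = 1 \<or> \<sigma> n $ i = -1"
      using assms(2) by (auto simp: sign_vectors_def)
    then show "\<bar>u \<sigma> * \<sigma> n $ i\<bar> = u \<sigma>"
      using assms(1) \<open>\<sigma> \<in> S\<close> by (auto simp: abs_mult)
  qed
  finally show ?thesis .
qed

lemma weighted_l1norm_le_iff_sign_patterns:
  fixes z :: "'i \<Rightarrow> real^'n"
  assumes "\<forall>n\<in>I. 0 \<le> alpha n"
  shows "(\<Sum>n\<in>I. alpha n * l1norm (z n)) \<le> gamma \<longleftrightarrow>
         (\<forall>\<sigma>\<in>I \<rightarrow>\<^sub>E (sign_vectors :: (real^'n) set). (\<Sum>n\<in>I. alpha n * (\<sigma> n \<bullet> z n)) \<le> gamma)"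
proof
  assume le: "(\<Sum>n\<in>I. alpha n * l1norm (z n)) \<le> gamma"
  show "\<forall>\<sigma>\<in>I \<rightarrow>\<^sub>E sign_vectors. (\<Sum>n\<in>I. alpha n * (\<sigma> n \<bullet> z n)) \<le> gamma"
  proof
    fix \<sigma> :: "'i \<Rightarrow> real^'n" assume "\<sigma> \<in> I \<rightarrow>\<^sub>E sign_vectors"
    then have "(\<Sum>n\<in>I. alpha n * (\<sigma> n \<bullet> z n)) \<le> (\<Sum>n\<in>I. alpha n * l1norm (z n))"
      using assms by (intro sum_mono mult_left_mono inner_sign_vector_le_l1norm) auto
    then show "(\<Sum>n\<in>I. alpha n * (\<sigma> n \<bullet> z n)) \<le> gamma"
      using le by linarith
  qed
next
  assume all: "\<forall>\<sigma>\<in>I \<rightarrow>\<^sub>E sign_vectors. (\<Sum>n\<in>I. alpha n * (\<sigma> n \<bullet> z n)) \<le> gamma"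
  have "\<forall>n. \<exists>s\<in>sign_vectors. s \<bullet> z n = l1norm (z n)"
    using l1norm_eq_inner_sign_vector by blast
  then obtain s where s: "\<And>n. s n \<in> sign_vectors \<and> s n \<bullet> z n = l1norm (z n)"
    by metis
  have "restrict s I \<in> I \<rightarrow>\<^sub>E sign_vectors"
    using s by simp
  then have "(\<Sum>n\<in>I. alpha n * (restrict s I n \<bullet> z n)) \<le> gamma"
    using all by blast
  then show "(\<Sum>n\<in>I. alpha n * l1norm (z n)) \<le> gamma"
    using s by (simp cong: sum.cong)
qed

lemma sign_patterns_positively_spanning:
  fixes z :: "real^'n"
  assumes "finite I" "k \<in> I" "\<forall>n\<in>I. 0 < alpha n"
    and nonneg: "\<forall>\<sigma>\<in>I \<rightarrow>\<^sub>E sign_vectors. 0 \<le> (\<Sum>n\<in>I. alpha n * (\<sigma> n \<bullet> z))"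
  shows "z = 0"
proof -
  obtain s where s: "s \<in> sign_vectors" "s \<bullet> z = l1norm z"
    using l1norm_eq_inner_sign_vector by blast
  have "- s \<in> sign_vectors"
    using s(1) by (auto simp: sign_vectors_def)
  then have "(\<lambda>n\<in>I. - s) \<in> I \<rightarrow>\<^sub>E sign_vectors"
    by simp
  then have "0 \<le> (\<Sum>n\<in>I. alpha n * ((\<lambda>n\<in>I. - s) n \<bullet> z))"
    using nonneg by blast
  also have "\<dots> = (\<Sum>n\<in>I. alpha n * (- s \<bullet> z))"
    by (simp cong: sum.cong)
  finally have "0 \<le> (\<Sum>n\<in>I. alpha n * (- s \<bullet> z))" .
  then have "(\<Sum>n\<in>I. alpha n) * l1norm z \<le> 0"
    using s(2) by (simp add: sum_distrib_right sum_negf)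
  moreover have "0 < (\<Sum>n\<in>I. alpha n)"
    using assms(1-3) by (intro sum_pos2[of I k]) (auto simp: less_imp_le)
  moreover have "0 \<le> l1norm z"
    by (simp add: l1norm_def sum_nonneg)
  ultimately have "l1norm z = 0"
    by (simp add: mult_le_0_iff)
  then show "z = 0"
    by (simp add: l1norm_eq_0_iff)
qed

lemma mem_U_set_iff:
  assumes "\<forall>n\<in>SV. 0 \<le> alpha n"
  shows "x \<in> U_set xi alpha SV W gamma \<longleftrightarrow>
         (\<Sum>n\<in>SV. alpha n * l1norm (W *v (x - xi n))) \<le> gamma"
proof
  assume "x \<in> U_set xi alpha SV W gamma"
  then obtain ups where ups_sum: "(\<Sum>n\<in>SV. alpha n * (\<Sum>i\<in>UNIV. ups n $ i)) \<le> gamma"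
    and ups_box: "\<forall>n\<in>SV. \<forall>i. - (ups n $ i) \<le> (W *v (x - xi n)) $ i \<and> (W *v (x - xi n)) $ i \<le> ups n $ i"
    unfolding U_set_def by blast
  then have ups_bound: "\<forall>n\<in>SV. \<forall>i. \<bar>(W *v (x - xi n)) $ i\<bar> \<le> ups n $ i"
    by (simp add: abs_le_iff minus_le_iff)
  have "(\<Sum>n\<in>SV. alpha n * l1norm (W *v (x - xi n))) \<le> (\<Sum>n\<in>SV. alpha n * (\<Sum>i\<in>UNIV. ups n $ i))"
    using assms ups_bound by (auto simp: l1norm_def intro!: sum_mono mult_left_mono)
  then show "(\<Sum>n\<in>SV. alpha n * l1norm (W *v (x - xi n))) \<le> gamma"
    using ups_sum by linarith
next
  assume "(\<Sum>n\<in>SV. alpha n * l1norm (W *v (x - xi n))) \<le> gamma"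
  then show "x \<in> U_set xi alpha SV W gamma"
    unfolding U_set_def l1norm_def
    by (intro CollectI exI[of _ "\<lambda>n. \<chi> i. \<bar>(W *v (x - xi n)) $ i\<bar>"]) auto
qed

definition sign_pattern_normal ::
  "(nat \<Rightarrow> real) \<Rightarrow> nat set \<Rightarrow> real^'d^'d \<Rightarrow> (nat \<Rightarrow> real^'d) \<Rightarrow> real^'d"
where
  "sign_pattern_normal alpha SV W \<sigma> = (\<Sum>n\<in>SV. alpha n *\<^sub>R (W *v \<sigma> n))"

definition sign_pattern_offset ::
  "(nat \<Rightarrow> real^'d) \<Rightarrow> (nat \<Rightarrow> real) \<Rightarrow> nat set \<Rightarrow> real^'d^'d \<Rightarrow> real \<Rightarrow> (nat \<Rightarrow> real^'d) \<Rightarrow> real"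
where
  "sign_pattern_offset xi alpha SV W gamma \<sigma> = gamma + (\<Sum>n\<in>SV. alpha n * (\<sigma> n \<bullet> (W *v xi n)))"

lemma inner_sign_pattern_normal:
  assumes "transpose W = W"
  shows "v \<bullet> sign_pattern_normal alpha SV W \<sigma> = (\<Sum>n\<in>SV. alpha n * (\<sigma> n \<bullet> (W *v v)))"
  by (simp add: sign_pattern_normal_def inner_sum_right symmetric_matrix_inner[OF assms])

lemma mem_U_set_iff_sign_patterns:
  assumes "transpose W = W" "\<forall>n\<in>SV. 0 \<le> alpha n"
  shows "x \<in> U_set xi alpha SV W gamma \<longleftrightarrow>
         (\<forall>\<sigma>\<in>SV \<rightarrow>\<^sub>E sign_vectors.
            sign_pattern_normal alpha SV W \<sigma> \<bullet> x \<le> sign_pattern_offset xi alpha SV W gamma \<sigma>)"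
proof -
  have diff: "sign_pattern_normal alpha SV W \<sigma> \<bullet> x - (sign_pattern_offset xi alpha SV W gamma \<sigma> - gamma) =
        (\<Sum>n\<in>SV. alpha n * (\<sigma> n \<bullet> (W *v (x - xi n))))" for \<sigma>
    by (simp add: inner_commute[of "sign_pattern_normal _ _ _ _"] inner_sign_pattern_normal[OF assms(1)]
        sign_pattern_offset_def matrix_vector_mult_diff_distrib inner_diff_right right_diff_distrib
        sum_subtractf)
  have "sign_pattern_normal alpha SV W \<sigma> \<bullet> x \<le> sign_pattern_offset xi alpha SV W gamma \<sigma> \<longleftrightarrow>
             (\<Sum>n\<in>SV. alpha n * (\<sigma> n \<bullet> (W *v (x - xi n)))) \<le> gamma" for \<sigma>
    using diff[of \<sigma>] by linarith
  then show ?thesis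
    using assms(2) by (simp add: mem_U_set_iff weighted_l1norm_le_iff_sign_patterns)
qed

text \<open>The dual of the robust constraint, with \<open>\<theta> n\<close> in place of \<open>\<mu> n - \<rho> n\<close>.\<close>

definition U_dual_feasible ::
  "(nat \<Rightarrow> real^'d) \<Rightarrow> (nat \<Rightarrow> real) \<Rightarrow> nat set \<Rightarrow> real^'d^'d \<Rightarrow> real \<Rightarrow> real^'d \<Rightarrow> real \<Rightarrow> bool"
where
  "U_dual_feasible xi alpha SV W gamma c \<beta> \<longleftrightarrow>
     (\<exists>\<pi> \<theta>. 0 \<le> \<pi> \<and> (\<forall>n\<in>SV. \<forall>i. \<bar>\<theta> n $ i\<bar> \<le> \<pi> * alpha n) \<and>
        (\<Sum>n\<in>SV. W *v \<theta> n) = c \<and> (\<Sum>n\<in>SV. \<theta> n \<bullet> (W *v xi n)) + \<pi> * gamma \<le> \<beta>)"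

lemma U_dual_feasible_imp_bound:
  assumes W: "transpose W = W" and alpha: "\<forall>n\<in>SV. 0 \<le> alpha n"
    and dual: "U_dual_feasible xi alpha SV W gamma c \<beta>"
    and x: "x \<in> U_set xi alpha SV W gamma"
  shows "x \<bullet> c \<le> \<beta>"
proof -
  obtain \<pi> \<theta> where "0 \<le> \<pi>" and \<theta>_bound: "\<forall>n\<in>SV. \<forall>i. \<bar>\<theta> n $ i\<bar> \<le> \<pi> * alpha n"
    and c: "(\<Sum>n\<in>SV. W *v \<theta> n) = c" and \<beta>: "(\<Sum>n\<in>SV. \<theta> n \<bullet> (W *v xi n)) + \<pi> * gamma \<le> \<beta>"
    using dual unfolding U_dual_feasible_def by blast
  have "x \<bullet> (W *v \<theta> n) = \<theta> n \<bullet> (W *v (x - xi n)) + \<theta> n \<bullet> (W *v xi n)" for n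
    by (simp add: symmetric_matrix_inner[OF W] matrix_vector_mult_diff_distrib inner_diff_right)
  then have "x \<bullet> c = (\<Sum>n\<in>SV. \<theta> n \<bullet> (W *v (x - xi n))) + (\<Sum>n\<in>SV. \<theta> n \<bullet> (W *v xi n))"
    unfolding c[symmetric] inner_sum_right sum.distrib[symmetric] by simp
  also have "(\<Sum>n\<in>SV. \<theta> n \<bullet> (W *v (x - xi n))) \<le> (\<Sum>n\<in>SV. \<pi> * alpha n * l1norm (W *v (x - xi n)))"
    using \<theta>_bound by (intro sum_mono inner_le_l1norm) auto
  also have "\<dots> = \<pi> * (\<Sum>n\<in>SV. alpha n * l1norm (W *v (x - xi n)))"
    by (simp add: sum_distrib_left mult.assoc)
  also have "\<dots> \<le> \<pi> * gamma"
    using x alpha \<open>0 \<le> \<pi>\<close> by (intro mult_left_mono) (simp_all add: mem_U_set_iff)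
  finally show ?thesis
    using \<beta> by linarith
qed

lemma consequence_cone_imp_U_dual_feasible:
  fixes W :: "real^'d^'d"
  assumes alpha: "\<forall>n\<in>SV. 0 \<le> alpha n"
    and cone: "(c, \<beta>) \<in> consequence_cone (SV \<rightarrow>\<^sub>E sign_vectors)
                 (sign_pattern_normal alpha SV W) (sign_pattern_offset xi alpha SV W gamma)"
  shows "U_dual_feasible xi alpha SV W gamma c \<beta>"
proof -
  define S :: "(nat \<Rightarrow> real^'d) set" where "S = SV \<rightarrow>\<^sub>E sign_vectors"
  obtain u where u_nonneg: "\<forall>\<sigma>\<in>S. 0 \<le> u \<sigma>"
    and c: "c = (\<Sum>\<sigma>\<in>S. u \<sigma> *\<^sub>R sign_pattern_normal alpha SV W \<sigma>)"
    and \<beta>: "(\<Sum>\<sigma>\<in>S. u \<sigma> * sign_pattern_offset xi alpha SV W gamma \<sigma>) \<le> \<beta>"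
    using cone unfolding consequence_cone_def S_def by blast
  define \<pi> where "\<pi> = (\<Sum>\<sigma>\<in>S. u \<sigma>)"
  define \<theta> where "\<theta> n = alpha n *\<^sub>R (\<Sum>\<sigma>\<in>S. u \<sigma> *\<^sub>R \<sigma> n)" for n
  have "\<bar>\<theta> n $ i\<bar> \<le> \<pi> * alpha n" if "n \<in> SV" for n i
  proof -
    have sum_bound: "\<bar>(\<Sum>\<sigma>\<in>S. u \<sigma> *\<^sub>R \<sigma> n) $ i\<bar> \<le> \<pi>"
      unfolding \<pi>_def using u_nonneg that
      by (intro abs_nonneg_combination_sign_vectors_le) (auto simp: S_def)
    have "0 \<le> alpha n"
      using alpha that by blast
    then have "\<bar>\<theta> n $ i\<bar> = \<bar>(\<Sum>\<sigma>\<in>S. u \<sigma> *\<^sub>R \<sigma> n) $ i\<bar> * alpha n"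
      by (simp add: \<theta>_def abs_mult)
    then show ?thesis
      using mult_right_mono[OF sum_bound \<open>0 \<le> alpha n\<close>] by simp
  qed
  moreover have "(\<Sum>n\<in>SV. W *v \<theta> n) = c"
    unfolding c sign_pattern_normal_def \<theta>_def
    by (simp add: matrix_vector_mult_sum matrix_vector_mult_scaleR scaleR_sum_right
        sum.swap[of _ SV] mult.commute)
  moreover have "(\<Sum>n\<in>SV. \<theta> n \<bullet> (W *v xi n)) + \<pi> * gamma =
                 (\<Sum>\<sigma>\<in>S. u \<sigma> * sign_pattern_offset xi alpha SV W gamma \<sigma>)"
    by (simp add: \<theta>_def \<pi>_def sign_pattern_offset_def inner_sum_left sum_distrib_left
        sum_distrib_right sum.distrib sum.swap[of _ SV] algebra_simps)
  moreover have "0 \<le> \<pi>"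
    unfolding \<pi>_def using u_nonneg by (simp add: sum_nonneg)
  ultimately show ?thesis
    unfolding U_dual_feasible_def using \<beta> by (intro exI[of _ \<pi>] exI[of _ \<theta>]) auto
qed

lemma bound_imp_U_dual_feasible:
  fixes W :: "real^'d^'d"
  assumes SV: "finite SV" "k \<in> SV" "\<forall>n\<in>SV. 0 < alpha n"
    and W: "transpose W = W" "\<And>v. W *v v = 0 \<Longrightarrow> v = 0"
    and bound: "\<forall>x\<in>U_set xi alpha SV W gamma. x \<bullet> c \<le> \<beta>"
  shows "U_dual_feasible xi alpha SV W gamma c \<beta>"
proof -
  have alpha: "\<forall>n\<in>SV. 0 \<le> alpha n"
    using SV(3) by (simp add: less_imp_le)
  have "(c, \<beta>) \<in> consequence_cone (SV \<rightarrow>\<^sub>E sign_vectors)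
                   (sign_pattern_normal alpha SV W) (sign_pattern_offset xi alpha SV W gamma)"
  proof (rule implied_inequality_in_consequence_cone)
    show "finite (SV \<rightarrow>\<^sub>E (sign_vectors :: (real^'d) set))"
      using SV(1) by (simp add: finite_PiE finite_sign_vectors)
  next
    fix v assume "\<forall>\<sigma>\<in>SV \<rightarrow>\<^sub>E sign_vectors. 0 \<le> v \<bullet> sign_pattern_normal alpha SV W \<sigma>"
    then have "W *v v = 0"
      using SV by (intro sign_patterns_positively_spanning) (auto simp: inner_sign_pattern_normal[OF W(1)])
    then show "v = 0"
      by (rule W(2))
  next
    fix x assume "\<forall>\<sigma>\<in>SV \<rightarrow>\<^sub>E sign_vectors.
                    sign_pattern_normal alpha SV W \<sigma> \<bullet> x \<le> sign_pattern_offset xi alpha SV W gamma \<sigma>"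
    then have "x \<bullet> c \<le> \<beta>"
      using bound mem_U_set_iff_sign_patterns[OF W(1) alpha] by blast
    then show "c \<bullet> x \<le> \<beta>"
      by (simp add: inner_commute)
  qed
  then show ?thesis
    using alpha by (rule consequence_cone_imp_U_dual_feasible[rotated])
qed

lemma U_bound_iff_U_dual_feasible:
  fixes W :: "real^'d^'d"
  assumes SV: "finite SV" "k \<in> SV" "\<forall>n\<in>SV. 0 < alpha n"
    and W: "transpose W = W" "\<And>v. W *v v = 0 \<Longrightarrow> v = 0"
  shows "(\<forall>x\<in>U_set xi alpha SV W gamma. x \<bullet> c \<le> \<beta>) \<longleftrightarrow> U_dual_feasible xi alpha SV W gamma c \<beta>"
proof
  show "U_dual_feasible xi alpha SV W gamma c \<beta>" if "\<forall>x\<in>U_set xi alpha SV W gamma. x \<bullet> c \<le> \<beta>"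
    using bound_imp_U_dual_feasible[OF SV W that] .
  have "\<forall>n\<in>SV. 0 \<le> alpha n"
    using SV(3) by (simp add: less_imp_le)
  then show "\<forall>x\<in>U_set xi alpha SV W gamma. x \<bullet> c \<le> \<beta>" if "U_dual_feasible xi alpha SV W gamma c \<beta>"
    using U_dual_feasible_imp_bound[OF W(1) _ that] by blast
qed

lemma U_dual_feasible_iff_split:
  "U_dual_feasible xi alpha SV W gamma c \<beta> \<longleftrightarrow>
   (\<exists>\<pi>::real. \<exists>\<mu> \<rho> :: nat \<Rightarrow> real^'d. 0 \<le> \<pi> \<and> (\<forall>n\<in>SV. \<forall>i. 0 \<le> \<mu> n $ i \<and> 0 \<le> \<rho> n $ i) \<and>
      (\<Sum>n\<in>SV. (\<mu> n - \<rho> n) \<bullet> (W *v xi n)) + \<pi> * gamma \<le> \<beta> \<and>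
      (\<Sum>n\<in>SV. W *v (\<rho> n - \<mu> n)) + c = 0 \<and>
      (\<forall>n\<in>SV. \<rho> n + \<mu> n = (\<chi> i. \<pi> * alpha n)))"
  (is "?dual \<longleftrightarrow> ?split")
proof -
  have W_swap: "(\<Sum>n\<in>SV. W *v (\<rho> n - \<mu> n)) = - (\<Sum>n\<in>SV. W *v (\<mu> n - \<rho> n))" for \<mu> \<rho>
    by (simp add: sum_negf[symmetric] matrix_vector_mult_diff_distrib)
  show ?thesis
  proof
    assume ?dual
    then obtain \<pi> \<theta> where "0 \<le> \<pi>" and \<theta>_bound: "\<forall>n\<in>SV. \<forall>i. \<bar>\<theta> n $ i\<bar> \<le> \<pi> * alpha n"
      and c: "(\<Sum>n\<in>SV. W *v \<theta> n) = c" and \<beta>: "(\<Sum>n\<in>SV. \<theta> n \<bullet> (W *v xi n)) + \<pi> * gamma \<le> \<beta>"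
      unfolding U_dual_feasible_def by blast
    define \<mu> where "\<mu> n = (1/2) *\<^sub>R ((\<chi> i. \<pi> * alpha n) + \<theta> n)" for n
    define \<rho> where "\<rho> n = (1/2) *\<^sub>R ((\<chi> i. \<pi> * alpha n) - \<theta> n)" for n
    have "\<mu> n - \<rho> n = \<theta> n" "\<rho> n + \<mu> n = (\<chi> i. \<pi> * alpha n)" for n
      by (simp_all add: \<mu>_def \<rho>_def vec_eq_iff field_simps)
    moreover have "0 \<le> \<mu> n $ i \<and> 0 \<le> \<rho> n $ i" if "n \<in> SV" for n i
    proof -
      have "\<bar>\<theta> n $ i\<bar> \<le> \<pi> * alpha n"
        using \<theta>_bound that by blast
      then show ?thesis
        by (auto simp: \<mu>_def \<rho>_def abs_le_iff)
    qed
    ultimately show ?split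
      using \<open>0 \<le> \<pi>\<close> c \<beta> W_swap[of \<rho> \<mu>] by (intro exI[of _ \<pi>] exI[of _ \<mu>] exI[of _ \<rho>]) simp
  next
    assume ?split
    then obtain \<pi> \<mu> \<rho> where "0 \<le> \<pi>" and nonneg: "\<forall>n\<in>SV. \<forall>i. 0 \<le> \<mu> n $ i \<and> 0 \<le> \<rho> n $ i"
      and \<beta>: "(\<Sum>n\<in>SV. (\<mu> n - \<rho> n) \<bullet> (W *v xi n)) + \<pi> * gamma \<le> \<beta>"
      and c: "(\<Sum>n\<in>SV. W *v (\<rho> n - \<mu> n)) + c = 0"
      and total: "\<forall>n\<in>SV. \<rho> n + \<mu> n = (\<chi> i. \<pi> * alpha n)"
      by blast
    have "\<bar>(\<mu> n - \<rho> n) $ i\<bar> \<le> \<pi> * alpha n" if "n \<in> SV" for n i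
    proof -
      have "\<rho> n $ i + \<mu> n $ i = \<pi> * alpha n"
        using total that by (metis vector_add_component vec_lambda_beta)
      moreover have "0 \<le> \<mu> n $ i" "0 \<le> \<rho> n $ i"
        using nonneg that by auto
      ultimately show ?thesis
        by (simp add: abs_le_iff)
    qed
    moreover have "(\<Sum>n\<in>SV. W *v (\<mu> n - \<rho> n)) = c"
      using c W_swap[of \<rho> \<mu>] by (simp add: add_eq_0_iff)
    ultimately show ?dual
      unfolding U_dual_feasible_def using \<open>0 \<le> \<pi>\<close> \<beta>
      by (intro exI[of _ \<pi>] exI[of _ "\<lambda>n. \<mu> n - \<rho> n"]) simp
  qed
qed

theorem proposition3:
  fixes N :: nat and eps :: real
    and xi :: "nat \<Rightarrow> real^'d"
    and Sigma W :: "real^'d^'d"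
    and ximin ximax :: "real^'d"
    and phi :: "real^'d \<Rightarrow> 'h::real_inner"
    and R :: real and c :: 'h and omega :: "nat \<Rightarrow> real"
    and alpha beta' :: "nat \<Rightarrow> real"
    and SV BSV :: "nat set" and k :: nat and gamma :: real
    and y :: "real^'p" and H :: "real^'d^'p" and \<beta> :: real
  assumes N_pos: "N \<ge> 1"
    and eps: "0 < eps" "eps < 1"
    and Sigma_sym: "transpose Sigma = Sigma"
    and Sigma_pd: "\<And>v. v \<noteq> 0 \<Longrightarrow> v \<bullet> (Sigma *v v) > 0"
    and W_sym: "transpose W = W"
    and W_pd: "\<And>v. v \<noteq> 0 \<Longrightarrow> v \<bullet> (W *v v) > 0"
    and W_sqrt: "W ** W ** Sigma = mat 1"
    and bounds: "\<And>d. ximin $ d \<le> ximax $ d"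
    and samples_box: "\<And>n d. n \<in> {1..N} \<Longrightarrow> ximin $ d \<le> xi n $ d \<and> xi n $ d \<le> ximax $ d"
    and feature: "\<And>m n. m \<in> {1..N} \<Longrightarrow> n \<in> {1..N} \<Longrightarrow>
                    inner (phi (xi m)) (phi (xi n)) = kernelK ximin ximax W (xi m) (xi n)"
    and opt: "svc_optimal N eps xi phi R c omega"
    and alpha_nonneg: "\<And>n. n \<in> {1..N} \<Longrightarrow> alpha n \<ge> 0"
    and beta'_nonneg: "\<And>n. n \<in> {1..N} \<Longrightarrow> beta' n \<ge> 0"
    and kkt1: "(\<Sum>n=1..N. alpha n) = 1"
    and kkt2: "c = (\<Sum>n=1..N. alpha n *\<^sub>R phi (xi n))"
    and kkt3: "\<And>n. n \<in> {1..N} \<Longrightarrow> alpha n + beta' n = 1 / (real N * eps)"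
    and kkt4: "\<And>n. n \<in> {1..N} \<Longrightarrow> omega n * beta' n = 0"
    and kkt5: "\<And>n. n \<in> {1..N} \<Longrightarrow>
                 alpha n * (R^2 + omega n - (norm (phi (xi n) - c))^2) = 0"
    and SV_def: "SV = {n \<in> {1..N}. alpha n > 0}"
    and BSV_def: "BSV = {n \<in> {1..N}. 0 < alpha n \<and> alpha n < 1 / (real N * eps)}"
    and k_BSV: "k \<in> BSV"
    and gamma_def: "gamma = (\<Sum>n\<in>SV. alpha n * l1norm (W *v (xi k - xi n)))"
  shows "(\<forall>x\<in>U_set xi alpha SV W gamma. (H *v x) \<bullet> y \<le> \<beta>) \<longleftrightarrow>
         (\<exists>\<pi>::real. \<exists>\<mu> \<rho> :: nat \<Rightarrow> real^'d.
            \<pi> \<ge> 0 \<and>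
            (\<forall>n\<in>SV. \<forall>i. \<mu> n $ i \<ge> 0 \<and> \<rho> n $ i \<ge> 0) \<and>
            (\<Sum>n\<in>SV. (\<mu> n - \<rho> n) \<bullet> (W *v xi n)) + \<pi> * gamma \<le> \<beta> \<and>
            (\<Sum>n\<in>SV. W *v (\<rho> n - \<mu> n)) + transpose H *v y = 0 \<and>
            (\<forall>n\<in>SV. \<rho> n + \<mu> n = (\<chi> i. \<pi> * alpha n)))"
proof -
  have SV: "finite SV" "k \<in> SV" "\<forall>n\<in>SV. 0 < alpha n"
    using SV_def BSV_def k_BSV by auto
  have W_inj: "v = 0" if "W *v v = 0" for v
    using W_pd[of v] that by fastforce
  have objective: "(H *v x) \<bullet> y = x \<bullet> (transpose H *v y)" for x
    by (simp add: dot_lmul_matrix[symmetric] inner_commute)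
  have "(\<forall>x\<in>U_set xi alpha SV W gamma. (H *v x) \<bullet> y \<le> \<beta>) \<longleftrightarrow>
        U_dual_feasible xi alpha SV W gamma (transpose H *v y) \<beta>"
    unfolding objective by (rule U_bound_iff_U_dual_feasible[OF SV W_sym W_inj])
  then show ?thesis
    unfolding U_dual_feasible_iff_split by simp
qed

end
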